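(* Let $\mathcal{G}$ be a simple MAG with a given topological ordering of its vertices. Let $i$ be a vertex and let $\{i,j_1\},\dots,\{i,j_k\}$ be all heads of size two containing $i$ whose other element precedes $i$, ordered so that $j_1<\dots<j_k<i$. Then $$\mathrm{pa}(i)=\mathrm{tail}(\{i\})\subseteq\mathrm{tail}(\{i,j_1\})\subseteq\cdots\subseteq\mathrm{tail}(\{i,j_k\}).$$
   Context: A MAG is an acyclic directed mixed graph (directed and bidirected edges, no directed cycles) with $\mathrm{sib}(v)\cap\mathrm{an}(v)=\emptyset$ for all $v$ and in which every nonadjacent pair of vertices is m-separated by some set. A topological ordering is an ordering of the vertices in which every ancestor of $v$ precedes $v$. $\mathrm{barren}(W)=\{w\in W:\mathrm{de}(w)\cap W=\{w\}\}$; a nonempty set $H$ is a head if $\mathrm{barren}(H)=H$ and $H$ lies in a single district (bidirected-connected component) of the induced subgraph $\mathcal{G}_{\mathrm{an}(H)}$; $\mathrm{tail}(H)=(\mathrm{dis}_{\mathrm{an}(H)}(H)\setminus H)\cup\mathrm{pa}(\mathrm{dis}_{\mathrm{an}(H)}(H))$, where $\mathrm{dis}_{\mathrm{an}(H)}(H)$ is the district of $\mathcal{G}_{\mathrm{an}(H)}$ containing $H$. A MAG is simple if it has no head with more than two elements. *)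

theory Defs
  imports Main
begin

text \<open>A mixed graph on a finite vertex set V with directed edges D
 ((u,v) \<in> D means u \<rightarrow> v) and bidirected edges B (symmetric, (u,v) \<in> B means u \<leftrightarrow> v).\<close>

definition pa :: "('a \<times> 'a) set \<Rightarrow> 'a \<Rightarrow> 'a set" where
  "pa D v = {u. (u, v) \<in> D}"

definition paS :: "('a \<times> 'a) set \<Rightarrow> 'a set \<Rightarrow> 'a set" where
  "paS D S = (\<Union>v\<in>S. pa D v)"

text \<open>ancestors / descendants include the vertex itself\<close>
definition an :: "('a \<times> 'a) set \<Rightarrow> 'a \<Rightarrow> 'a set" where
  "an D v = {u. (u, v) \<in> D\<^sup>*}"

definition anS :: "('a \<times> 'a) set \<Rightarrow> 'a set \<Rightarrow> 'a set" where
  "anS D S = (\<Union>v\<in>S. an D v)"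

definition de :: "('a \<times> 'a) set \<Rightarrow> 'a \<Rightarrow> 'a set" where
  "de D v = {w. (v, w) \<in> D\<^sup>*}"

definition sib :: "('a \<times> 'a) set \<Rightarrow> 'a \<Rightarrow> 'a set" where
  "sib B v = {u. (u, v) \<in> B}"

definition mixed_graph :: "'a set \<Rightarrow> ('a \<times> 'a) set \<Rightarrow> ('a \<times> 'a) set \<Rightarrow> bool" where
  "mixed_graph V D B \<longleftrightarrow> finite V \<and> D \<subseteq> V \<times> V \<and> B \<subseteq> V \<times> V \<and> sym B
     \<and> (\<forall>v. (v, v) \<notin> B)"

definition acyclic_dir :: "('a \<times> 'a) set \<Rightarrow> bool" where
  "acyclic_dir D \<longleftrightarrow> (\<forall>v. (v, v) \<notin> D\<^sup>+)"

definition ancestral :: "'a set \<Rightarrow> ('a \<times> 'a) set \<Rightarrow> ('a \<times> 'a) set \<Rightarrow> bool" where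
  "ancestral V D B \<longleftrightarrow> (\<forall>v\<in>V. sib B v \<inter> an D v = {})"

definition adjacent :: "('a \<times> 'a) set \<Rightarrow> ('a \<times> 'a) set \<Rightarrow> 'a \<Rightarrow> 'a \<Rightarrow> bool" where
  "adjacent D B u v \<longleftrightarrow> (u, v) \<in> D \<or> (v, u) \<in> D \<or> (u, v) \<in> B"

definition arrowhead_at :: "('a \<times> 'a) set \<Rightarrow> ('a \<times> 'a) set \<Rightarrow> 'a \<Rightarrow> 'a \<Rightarrow> bool" where
  "arrowhead_at D B u v \<longleftrightarrow> (u, v) \<in> D \<or> (u, v) \<in> B"

text \<open>A path given by its (distinct) vertex sequence; in an ancestral acyclic graph
 any two vertices are joined by at most one edge, so this determines the edges.\<close>
definition is_path :: "'a set \<Rightarrow> ('a \<times> 'a) set \<Rightarrow> ('a \<times> 'a) set \<Rightarrow> 'a list \<Rightarrow> bool" where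
  "is_path V D B ps \<longleftrightarrow> length ps \<ge> 2 \<and> distinct ps \<and> set ps \<subseteq> V
     \<and> (\<forall>k. Suc k < length ps \<longrightarrow> adjacent D B (ps ! k) (ps ! Suc k))"

definition collider :: "('a \<times> 'a) set \<Rightarrow> ('a \<times> 'a) set \<Rightarrow> 'a list \<Rightarrow> nat \<Rightarrow> bool" where
  "collider D B ps k \<longleftrightarrow> 0 < k \<and> Suc k < length ps
     \<and> arrowhead_at D B (ps ! (k - 1)) (ps ! k) \<and> arrowhead_at D B (ps ! Suc k) (ps ! k)"

definition m_connecting :: "'a set \<Rightarrow> ('a \<times> 'a) set \<Rightarrow> ('a \<times> 'a) set \<Rightarrow> 'a set \<Rightarrow> 'a list \<Rightarrow> bool" where
  "m_connecting V D B Z ps \<longleftrightarrow> is_path V D B ps \<and> hd ps \<notin> Z \<and> last ps \<notin> Z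
     \<and> (\<forall>k. 0 < k \<and> Suc k < length ps \<longrightarrow>
          (collider D B ps k \<longrightarrow> ps ! k \<in> anS D Z)
        \<and> (\<not> collider D B ps k \<longrightarrow> ps ! k \<notin> Z))"

definition m_separated :: "'a set \<Rightarrow> ('a \<times> 'a) set \<Rightarrow> ('a \<times> 'a) set \<Rightarrow> 'a \<Rightarrow> 'a \<Rightarrow> 'a set \<Rightarrow> bool" where
  "m_separated V D B x y Z \<longleftrightarrow>
     \<not> (\<exists>ps. hd ps = x \<and> last ps = y \<and> m_connecting V D B Z ps)"

definition maximal :: "'a set \<Rightarrow> ('a \<times> 'a) set \<Rightarrow> ('a \<times> 'a) set \<Rightarrow> bool" where
  "maximal V D B \<longleftrightarrow> (\<forall>x\<in>V. \<forall>y\<in>V. x \<noteq> y \<and> \<not> adjacent D B x y \<longrightarrow>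
       (\<exists>Z. Z \<subseteq> V - {x, y} \<and> m_separated V D B x y Z))"

definition MAG :: "'a set \<Rightarrow> ('a \<times> 'a) set \<Rightarrow> ('a \<times> 'a) set \<Rightarrow> bool" where
  "MAG V D B \<longleftrightarrow> mixed_graph V D B \<and> acyclic_dir D \<and> ancestral V D B \<and> maximal V D B"

definition barren :: "('a \<times> 'a) set \<Rightarrow> 'a set \<Rightarrow> 'a set" where
  "barren D W = {w\<in>W. de D w \<inter> W = {w}}"

definition Bind :: "('a \<times> 'a) set \<Rightarrow> 'a set \<Rightarrow> ('a \<times> 'a) set" where
  "Bind B A = B \<inter> (A \<times> A)"

definition dis :: "('a \<times> 'a) set \<Rightarrow> 'a set \<Rightarrow> 'a set \<Rightarrow> 'a set" where
  "dis B A H = {v\<in>A. \<exists>h\<in>H. (h, v) \<in> (Bind B A)\<^sup>*}"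

definition is_head :: "'a set \<Rightarrow> ('a \<times> 'a) set \<Rightarrow> ('a \<times> 'a) set \<Rightarrow> 'a set \<Rightarrow> bool" where
  "is_head V D B H \<longleftrightarrow> H \<noteq> {} \<and> H \<subseteq> V \<and> barren D H = H
     \<and> (\<forall>h\<in>H. \<forall>h'\<in>H. (h, h') \<in> (Bind B (anS D H))\<^sup>*)"

definition tail :: "('a \<times> 'a) set \<Rightarrow> ('a \<times> 'a) set \<Rightarrow> 'a set \<Rightarrow> 'a set" where
  "tail D B H = (dis B (anS D H) H - H) \<union> paS D (dis B (anS D H) H)"

definition simple_MAG :: "'a set \<Rightarrow> ('a \<times> 'a) set \<Rightarrow> ('a \<times> 'a) set \<Rightarrow> bool" where
  "simple_MAG V D B \<longleftrightarrow> MAG V D B \<and> (\<forall>H. is_head V D B H \<longrightarrow> card H \<le> 2)"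

definition topo_order :: "'a set \<Rightarrow> ('a \<times> 'a) set \<Rightarrow> ('a \<Rightarrow> nat) \<Rightarrow> bool" where
  "topo_order V D ord \<longleftrightarrow> inj_on ord V
     \<and> (\<forall>u\<in>V. \<forall>v\<in>V. u \<in> an D v \<and> u \<noteq> v \<longrightarrow> ord u < ord v)"

end

theory Submission
  imports Defs
begin

text \<open>In an ancestral graph no sibling of \<open>i\<close> is an ancestor of \<open>i\<close>, so the district of \<open>{i}\<close>
  in \<open>\<G>\<^bsub>an(i)\<^esub>\<close> is \<open>{i}\<close> and \<open>tail({i}) = pa(i)\<close>; as \<open>i\<close> lies in the district of every
  head containing it, \<open>pa(i)\<close> is contained in the tail of such a head.
  For heads \<open>{i, j}\<close> and \<open>{i, j'}\<close> with \<open>j < j'\<close>, the set \<open>{i, j, j'}\<close> lies in one district of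
  \<open>\<G>\<^bsub>an({i, j, j'})\<^esub>\<close>; a simple MAG has no head of size three, so it is not barren, and
  since \<open>j'\<close> is not an ancestor of \<open>j\<close>, \<open>j\<close> is an ancestor of \<open>j'\<close>. Hence
  \<open>an({i, j}) \<subseteq> an({i, j'})\<close>, the district of \<open>{i, j}\<close> lies in that of \<open>{i, j'}\<close>, and it misses
  \<open>j'\<close>, which is an ancestor of neither \<open>i\<close> nor \<open>j\<close>; so the tails are nested.\<close>

lemma anS_subset_anS: "H \<subseteq> anS D H' \<Longrightarrow> anS D H \<subseteq> anS D H'"
  unfolding anS_def an_def by (blast intro: rtrancl_trans)

lemma subset_anS: "H \<subseteq> anS D H"
  unfolding anS_def an_def by blast

lemma rtrancl_Bind_mono: "A \<subseteq> A' \<Longrightarrow> (Bind B A)\<^sup>* \<subseteq> (Bind B A')\<^sup>*"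
  unfolding Bind_def by (rule rtrancl_mono) blast

lemma subset_dis: "H \<subseteq> dis B (anS D H) H"
  unfolding dis_def using subset_anS[of H D] by blast

lemma dis_subset_dis:
  assumes "A \<subseteq> A'" and "H \<subseteq> dis B A' H'"
  shows "dis B A H \<subseteq> dis B A' H'"
proof
  fix v assume "v \<in> dis B A H"
  then obtain h where "v \<in> A" "h \<in> H" "(h, v) \<in> (Bind B A')\<^sup>*"
    unfolding dis_def using rtrancl_Bind_mono[OF assms(1)] by blast
  moreover obtain h' where "h' \<in> H'" "(h', h) \<in> (Bind B A')\<^sup>*"
    using assms(2) \<open>h \<in> H\<close> unfolding dis_def by blast
  ultimately show "v \<in> dis B A' H'"
    using assms(1) unfolding dis_def by (blast intro: rtrancl_trans)
qed

lemma barren_eq_self_iff: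
  "barren D H = H \<longleftrightarrow> (\<forall>h\<in>H. \<forall>h'\<in>H. (h, h') \<in> D\<^sup>* \<longrightarrow> h = h')"
proof (intro iffI ballI impI)
  fix h h' assume "barren D H = H" "h \<in> H" "h' \<in> H" "(h, h') \<in> D\<^sup>*"
  then have "de D h \<inter> H = {h}" and "h' \<in> de D h \<inter> H"
    unfolding barren_def de_def by (metis (lifting) mem_Collect_eq, simp)
  then show "h = h'" by simp
next
  assume "\<forall>h\<in>H. \<forall>h'\<in>H. (h, h') \<in> D\<^sup>* \<longrightarrow> h = h'"
  then have "de D h \<inter> H = {h}" if "h \<in> H" for h
    using that unfolding de_def by auto
  then show "barren D H = H"
    unfolding barren_def by auto
qed

lemma head_not_ancestor:
  "is_head V D B H \<Longrightarrow> h \<in> H \<Longrightarrow> h' \<in> H \<Longrightarrow> h \<noteq> h' \<Longrightarrow> (h, h') \<notin> D\<^sup>*"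
  unfolding is_head_def barren_eq_self_iff by blast

lemma head_connected:
  "is_head V D B H \<Longrightarrow> anS D H \<subseteq> A \<Longrightarrow> h \<in> H \<Longrightarrow> h' \<in> H \<Longrightarrow> (h, h') \<in> (Bind B A)\<^sup>*"
  unfolding is_head_def using rtrancl_Bind_mono by blast

lemma head_subset_dis:
  assumes "is_head V D B H" and "anS D H \<subseteq> A" and "c \<in> H \<inter> H'"
  shows "H \<subseteq> dis B A H'"
  using head_connected[OF assms(1,2)] assms(2,3) subset_anS[of H D] unfolding dis_def by blast

lemma is_head_Un:
  assumes "is_head V D B H" and "is_head V D B H'" and "c \<in> H \<inter> H'"
    and "barren D (H \<union> H') = H \<union> H'"
  shows "is_head V D B (H \<union> H')"
proof -
  let ?A = "anS D (H \<union> H')"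
  have "(h, c) \<in> (Bind B ?A)\<^sup>*" "(c, h) \<in> (Bind B ?A)\<^sup>*" if "h \<in> H \<union> H'" for h
    using that assms(3) head_connected[OF assms(1)] head_connected[OF assms(2)]
      anS_subset_anS[of H D "H \<union> H'"] anS_subset_anS[of H' D "H \<union> H'"] subset_anS[of "H \<union> H'" D]
    by blast+
  then have "\<forall>h\<in>H \<union> H'. \<forall>h'\<in>H \<union> H'. (h, h') \<in> (Bind B ?A)\<^sup>*"
    by (blast intro: rtrancl_trans)
  then show ?thesis
    using assms unfolding is_head_def by blast
qed

lemma tail_subset_tail:
  assumes "dis B (anS D H) H \<subseteq> dis B (anS D H') H'" and "dis B (anS D H) H \<inter> H' \<subseteq> H"
  shows "tail D B H \<subseteq> tail D B H'"
  using assms unfolding tail_def paS_def by blast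

lemma pa_subset_tail: "i \<in> H \<Longrightarrow> pa D i \<subseteq> tail D B H"
  using subset_dis[of H B D] unfolding tail_def paS_def by blast

lemma dis_singleton_ancestral:
  assumes "ancestral V D B" and "sym B" and "i \<in> V"
  shows "dis B (anS D {i}) {i} = {i}"
proof -
  have no_edge: "Bind B (anS D {i}) `` {i} = {}"
    using assms unfolding ancestral_def sib_def Bind_def anS_def by (auto dest: symD)
  have "v = i" if "(i, v) \<in> (Bind B (anS D {i}))\<^sup>*" for v
    using that by (cases rule: converse_rtranclE) (use no_edge in auto)
  then show ?thesis
    using subset_dis[of "{i}" B D] unfolding dis_def by auto
qed

lemma tail_singleton_ancestral:
  "ancestral V D B \<Longrightarrow> sym B \<Longrightarrow> i \<in> V \<Longrightarrow> tail D B {i} = pa D i"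
  unfolding tail_def dis_singleton_ancestral paS_def by simp

lemma topo_order_not_ancestor:
  "topo_order V D ord \<Longrightarrow> u \<in> V \<Longrightarrow> v \<in> V \<Longrightarrow> ord v < ord u \<Longrightarrow> (u, v) \<notin> D\<^sup>*"
  unfolding topo_order_def an_def by (metis less_asym mem_Collect_eq)

lemma simple_MAG_head_pairs_comparable:
  assumes "simple_MAG V D B" and "is_head V D B {i, j}" and "is_head V D B {i, j'}"
    and "i \<noteq> j" and "i \<noteq> j'" and "j \<noteq> j'"
  shows "(j, j') \<in> D\<^sup>* \<or> (j', j) \<in> D\<^sup>*"
proof (rule ccontr)
  assume "\<not> ?thesis"
  moreover have "(i, j) \<notin> D\<^sup>*" "(j, i) \<notin> D\<^sup>*" "(i, j') \<notin> D\<^sup>*" "(j', i) \<notin> D\<^sup>*"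
    using head_not_ancestor[OF assms(2)] head_not_ancestor[OF assms(3)] assms(4,5) by auto
  ultimately have "barren D ({i, j} \<union> {i, j'}) = {i, j} \<union> {i, j'}"
    unfolding barren_eq_self_iff by auto
  then have "is_head V D B ({i, j} \<union> {i, j'})"
    using is_head_Un[OF assms(2,3)] by blast
  then have "card ({i, j} \<union> {i, j'}) \<le> 2"
    using assms(1) unfolding simple_MAG_def by blast
  moreover have "{i, j} \<union> {i, j'} = {i, j, j'}"
    by blast
  ultimately show False
    using assms(4-6) by simp
qed

lemma tail_head_pair_subset:
  assumes "simple_MAG V D B" and "is_head V D B {i, j}" and "is_head V D B {i, j'}"
    and "i \<noteq> j" and "i \<noteq> j'" and "j \<noteq> j'" and "(j', j) \<notin> D\<^sup>*"
  shows "tail D B {i, j} \<subseteq> tail D B {i, j'}"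
proof -
  have "(j, j') \<in> D\<^sup>*"
    using simple_MAG_head_pairs_comparable[OF assms(1-6)] assms(7) by blast
  then have "{i, j} \<subseteq> anS D {i, j'}"
    unfolding anS_def an_def by blast
  then have an: "anS D {i, j} \<subseteq> anS D {i, j'}"
    by (rule anS_subset_anS)
  have "{i, j} \<subseteq> dis B (anS D {i, j'}) {i, j'}"
    using head_subset_dis[OF assms(2) an, of i] by blast
  then have "dis B (anS D {i, j}) {i, j} \<subseteq> dis B (anS D {i, j'}) {i, j'}"
    by (rule dis_subset_dis[OF an])
  moreover have "j' \<notin> anS D {i, j}"
    using head_not_ancestor[OF assms(3), of j' i] assms(5,7) unfolding anS_def an_def by auto
  then have "dis B (anS D {i, j}) {i, j} \<inter> {i, j'} \<subseteq> {i, j}"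
    unfolding dis_def by blast
  ultimately show ?thesis
    by (rule tail_subset_tail)
qed

theorem lemma3p14:
  fixes V :: "'a set" and D B :: "('a \<times> 'a) set" and ord :: "'a \<Rightarrow> nat" and i :: 'a
  assumes "simple_MAG V D B"
    and "topo_order V D ord"
    and "i \<in> V"
  shows "pa D i = tail D B {i}
    \<and> (\<forall>j. j \<noteq> i \<and> is_head V D B {i, j} \<and> ord j < ord i \<longrightarrow> tail D B {i} \<subseteq> tail D B {i, j})
    \<and> (\<forall>j j'. j \<noteq> i \<and> j' \<noteq> i \<and> is_head V D B {i, j} \<and> is_head V D B {i, j'}
              \<and> ord j < ord j' \<and> ord j' < ord i \<longrightarrow> tail D B {i, j} \<subseteq> tail D B {i, j'})"
proof -
  have "ancestral V D B" and "sym B"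
    using assms(1) unfolding simple_MAG_def MAG_def mixed_graph_def by blast+
  then have tail_i: "tail D B {i} = pa D i"
    using assms(3) by (rule tail_singleton_ancestral)
  have "tail D B {i, j} \<subseteq> tail D B {i, j'}"
    if "j \<noteq> i" "j' \<noteq> i" "is_head V D B {i, j}" "is_head V D B {i, j'}" "ord j < ord j'" for j j'
  proof -
    have "j \<in> V" "j' \<in> V"
      using that(3,4) unfolding is_head_def by blast+
    then have "(j', j) \<notin> D\<^sup>*"
      using topo_order_not_ancestor[OF assms(2)] that(5) by blast
    then show ?thesis
      using tail_head_pair_subset[OF assms(1) that(3,4)] that by fastforce
  qed
  then show ?thesis
    using tail_i pa_subset_tail[of i "{i, _}" D B] by auto
qed

end
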